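(* Let $\mathbf{x},\mathbf{v}$ be random variables, $\mathrm{t}\in\{0,1\}$ a treatment and $\mathbf{y}(t)$ the potential outcomes. Suppose $\mathbf{x}$ is a balancing covariate of $\mathbf{v}$, i.e. $\mathrm{t}\perp\mathbf{v}\mid\mathbf{x}$. If $\mathbf{v}$ satisfies exchangeability ($\mathbf{y}(t)\perp\mathrm{t}\mid\mathbf{v}$) and $\mathbf{y}(t)\perp\mathbf{x}\mid\mathbf{v},\mathrm{t}$, then $\mathbf{x}$ satisfies exchangeability, i.e. $\mathbf{y}(t)\perp\mathrm{t}\mid\mathbf{x}$.
   Context: Potential outcomes framework with binary treatment $\mathrm{t}$ and potential outcomes $\mathbf{y}(0),\mathbf{y}(1)$; statements involving $t$ without quantification are meant for both $t\in\{0,1\}$. *)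

theory Defs
  imports "HOL-Probability.Probability"
begin

definition cond_indep ::
  "'a measure \<Rightarrow> 'x measure \<Rightarrow> ('a \<Rightarrow> 'x) \<Rightarrow> 'y measure \<Rightarrow> ('a \<Rightarrow> 'y)
    \<Rightarrow> 'z measure \<Rightarrow> ('a \<Rightarrow> 'z) \<Rightarrow> bool" where
  "cond_indep M MX X MY Y MZ Z \<longleftrightarrow>
     (\<forall>A\<in>sets MX. \<forall>B\<in>sets MY.
        AE \<omega> in M.
          real_cond_exp M (vimage_algebra (space M) Z MZ)
              (\<lambda>\<omega>. indicator A (X \<omega>) * indicator B (Y \<omega>)) \<omega>
          = real_cond_exp M (vimage_algebra (space M) Z MZ) (\<lambda>\<omega>. indicator A (X \<omega>)) \<omega>
            * real_cond_exp M (vimage_algebra (space M) Z MZ) (\<lambda>\<omega>. indicator B (Y \<omega>)) \<omega>)"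

end

theory Submission
  imports Defs
begin

(* Fix events B, S, A and write b = 1_B(Y(t)), tau = 1_S(T), a = 1_A(X) and g = E[b | V].
   Exchangeability given V means that T carries no further information on b once V is known,
   i.e. E[b | V, T] = g; together with Y(t) indep X | (V, T) this gives E[a tau b] = E[a tau g].
   Since g is a function of V, the balancing property T indep V | X allows to replace tau by
   E[tau | X], so E[a tau g] = E[a E[tau | X] g].  The first identity with tau = 1 shows
   E[g | X] = E[b | X], whence E[a tau b] = E[a E[tau | X] E[b | X]]: this is the
   factorisation defining Y(t) indep T | X, tested against the event {X in A}. *)

lemma measurable_vimage_algebra_self:
  "Z \<in> measurable M N \<Longrightarrow> Z \<in> measurable (vimage_algebra (space M) Z N) N"
  by (rule measurable_vimage_algebra1) (auto simp: measurable_def)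

lemma measurable_vimage_algebra_comp:
  assumes "Z \<in> measurable M N" "\<phi> \<in> measurable N K"
  shows "measurable (vimage_algebra (space M) (\<lambda>x. \<phi> (Z x)) K) L
    \<subseteq> measurable (vimage_algebra (space M) Z N) L"
proof (rule measurable_mono)
  have "(\<lambda>x. \<phi> (Z x)) \<in> measurable (vimage_algebra (space M) Z N) K"
    using measurable_vimage_algebra_self[OF assms(1)] assms(2) by (rule measurable_compose)
  then show "sets (vimage_algebra (space M) (\<lambda>x. \<phi> (Z x)) K) \<subseteq> sets (vimage_algebra (space M) Z N)"
    by (intro sets_image_in_sets) simp_all
qed simp_all

lemma indicator_Pair_finite_sum:
  fixes D :: "('v \<times> 't::finite) set"
  shows "indicator D (v, s) = (\<Sum>t\<in>UNIV. indicator ((\<lambda>v. (v, t)) -` D) v * indicator {t} s :: real)"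
  by (simp add: indicator_def if_distrib[where f="\<lambda>x. x * _"] sum.delta)

lemma integrable_mult_bounded:
  fixes f h :: "'a \<Rightarrow> real"
  assumes "integrable M f" "h \<in> borel_measurable M" "AE x in M. \<bar>h x\<bar> \<le> K"
  shows "integrable M (\<lambda>x. h x * f x)"
proof (rule Bochner_Integration.integrable_bound)
  show "integrable M (\<lambda>x. K * f x)" using assms(1) by simp
  show "AE x in M. norm (h x * f x) \<le> norm (K * f x)"
    using assms(3) by eventually_elim (auto simp: abs_mult intro: mult_right_mono)
qed (use assms in \<open>auto simp: borel_measurable_integrable\<close>)

lemma AE_abs_mult_le_one:
  fixes f g :: "'a \<Rightarrow> real"
  assumes "AE x in M. \<bar>f x\<bar> \<le> 1" "AE x in M. \<bar>g x\<bar> \<le> 1"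
  shows "AE x in M. \<bar>f x * g x\<bar> \<le> 1"
  using assms by eventually_elim (simp add: abs_mult mult_le_one)

lemma (in sigma_finite_subalgebra) real_cond_exp_abs_le:
  assumes "integrable M f" "AE x in M. \<bar>f x\<bar> \<le> c"
  shows "AE x in M. \<bar>real_cond_exp M F f x\<bar> \<le> c"
proof -
  have "AE x in M. real_cond_exp M F f x \<le> c"
    using assms by (intro real_cond_exp_le_c) auto
  moreover have "AE x in M. real_cond_exp M F f x \<ge> - c"
    using assms by (intro real_cond_exp_ge_c) auto
  ultimately show ?thesis by eventually_elim simp
qed

context prob_space
begin

lemma sigma_finite_subalgebra_vimage_algebra:
  assumes "Z \<in> measurable M N"
  shows "sigma_finite_subalgebra M (vimage_algebra (space M) Z N)"
proof (rule finite_measure_subalgebra_is_sigma_finite)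
  have "subalgebra M (vimage_algebra (space M) Z N)"
    unfolding subalgebra_def using assms by (simp add: sets_image_in_sets)
  then show "finite_measure_subalgebra M (vimage_algebra (space M) Z N)"
    by unfold_locales
qed

lemma set_integral_vimage:
  fixes f :: "'a \<Rightarrow> real"
  shows "(\<integral>x\<in>Z -` C \<inter> space M. f x \<partial>M) = (\<integral>x. indicator C (Z x) * f x \<partial>M)"
  unfolding set_lebesgue_integral_def
  by (intro Bochner_Integration.integral_cong) (auto simp: indicator_def)

lemma real_cond_exp_vimage_algebra_charact:
  assumes Z: "Z \<in> measurable M N" and "integrable M f" "integrable M g"
    and "g \<in> borel_measurable (vimage_algebra (space M) Z N)"
    and eq: "\<And>C. C \<in> sets N \<Longrightarrow>
      (\<integral>x. indicator C (Z x) * f x \<partial>M) = (\<integral>x. indicator C (Z x) * g x \<partial>M)"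
  shows "AE x in M. real_cond_exp M (vimage_algebra (space M) Z N) f x = g x"
proof -
  interpret sigma_finite_subalgebra M "vimage_algebra (space M) Z N"
    using Z by (rule sigma_finite_subalgebra_vimage_algebra)
  show ?thesis
  proof (rule real_cond_exp_charact)
    fix G assume "G \<in> sets (vimage_algebra (space M) Z N)"
    with Z obtain C where "C \<in> sets N" "G = Z -` C \<inter> space M"
      by (auto simp: sets_vimage_algebra2 measurable_def)
    with eq show "(\<integral>x\<in>G. f x \<partial>M) = (\<integral>x\<in>G. g x \<partial>M)"
      by (simp add: set_integral_vimage)
  qed fact+
qed

lemma cond_indep_integral_mult:
  assumes [measurable]: "X \<in> measurable M MX" "Y \<in> measurable M MY" "Z \<in> measurable M MZ"
    and indep: "cond_indep M MX X MY Y MZ Z"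
    and [measurable]: "A \<in> sets MX" "B \<in> sets MY"
    and h: "h \<in> borel_measurable (vimage_algebra (space M) Z MZ)" "AE x in M. \<bar>h x\<bar> \<le> 1"
  shows "(\<integral>x. h x * indicator A (X x) * indicator B (Y x) \<partial>M) =
    (\<integral>x. h x * real_cond_exp M (vimage_algebra (space M) Z MZ) (\<lambda>x. indicator A (X x)) x
      * indicator B (Y x) \<partial>M)"
proof -
  let ?F = "vimage_algebra (space M) Z MZ"
  let ?a = "\<lambda>x. indicator A (X x) :: real" and ?b = "\<lambda>x. indicator B (Y x) :: real"
  interpret F: sigma_finite_subalgebra M ?F
    by (rule sigma_finite_subalgebra_vimage_algebra) fact
  have [measurable]: "h \<in> borel_measurable M"
    using F.subalg h(1) by (rule measurable_from_subalg)
  have "integrable M ?a"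
    by (auto intro!: integrable_const_bound[where B=1])
  then have "AE x in M. \<bar>real_cond_exp M ?F ?a x\<bar> \<le> 1"
    by (rule F.real_cond_exp_abs_le) simp
  then have hEa: "AE x in M. \<bar>h x * real_cond_exp M ?F ?a x\<bar> \<le> 1"
    using h(2) by (intro AE_abs_mult_le_one)
  have "(\<integral>x. h x * ?a x * ?b x \<partial>M) = (\<integral>x. h x * (?a x * ?b x) \<partial>M)"
    by (simp add: mult.assoc)
  also have "\<dots> = (\<integral>x. h x * real_cond_exp M ?F (\<lambda>x. ?a x * ?b x) x \<partial>M)"
  proof (intro F.real_cond_exp_intg(2)[symmetric] integrable_const_bound[where B=1])
    show "AE x in M. norm (h x * (?a x * ?b x)) \<le> 1"
      using h(2) by eventually_elim (auto simp: abs_mult split: split_indicator)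
  qed (use h in auto)
  also have "\<dots> = (\<integral>x. h x * real_cond_exp M ?F ?a x * real_cond_exp M ?F ?b x \<partial>M)"
  proof (rule integral_cong_AE)
    have "AE x in M. real_cond_exp M ?F (\<lambda>x. ?a x * ?b x) x
        = real_cond_exp M ?F ?a x * real_cond_exp M ?F ?b x"
      using indep \<open>A \<in> sets MX\<close> \<open>B \<in> sets MY\<close> unfolding cond_indep_def by blast
    then show "AE x in M. h x * real_cond_exp M ?F (\<lambda>x. ?a x * ?b x) x
        = h x * real_cond_exp M ?F ?a x * real_cond_exp M ?F ?b x"
      by eventually_elim (simp add: mult.assoc)
  qed auto
  also have "\<dots> = (\<integral>x. h x * real_cond_exp M ?F ?a x * ?b x \<partial>M)"
  proof (intro F.real_cond_exp_intg(2) integrable_const_bound[where B=1])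
    show "AE x in M. norm (h x * real_cond_exp M ?F ?a x * ?b x) \<le> 1"
      using hEa by eventually_elim (auto simp: abs_mult split: split_indicator)
  qed (use h in auto)
  finally show ?thesis .
qed

lemma cond_indepI:
  assumes [measurable]: "X \<in> measurable M MX" "Y \<in> measurable M MY" "Z \<in> measurable M MZ"
    and factor: "\<And>A B C. A \<in> sets MX \<Longrightarrow> B \<in> sets MY \<Longrightarrow> C \<in> sets MZ \<Longrightarrow>
      (\<integral>x. indicator C (Z x) * indicator A (X x) * indicator B (Y x) \<partial>M) =
      (\<integral>x. indicator C (Z x)
        * real_cond_exp M (vimage_algebra (space M) Z MZ) (\<lambda>x. indicator A (X x)) x
        * real_cond_exp M (vimage_algebra (space M) Z MZ) (\<lambda>x. indicator B (Y x)) x \<partial>M)"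
  shows "cond_indep M MX X MY Y MZ Z"
  unfolding cond_indep_def
proof (intro ballI)
  fix A B assume [measurable]: "A \<in> sets MX" "B \<in> sets MY"
  let ?F = "vimage_algebra (space M) Z MZ"
  let ?a = "\<lambda>x. indicator A (X x) :: real" and ?b = "\<lambda>x. indicator B (Y x) :: real"
  interpret F: sigma_finite_subalgebra M ?F
    by (rule sigma_finite_subalgebra_vimage_algebra) fact
  have ab: "integrable M ?a" "integrable M ?b"
    by (auto intro!: integrable_const_bound[where B=1])
  have "AE x in M. \<bar>real_cond_exp M ?F ?a x\<bar> \<le> 1" "AE x in M. \<bar>real_cond_exp M ?F ?b x\<bar> \<le> 1"
    using ab by (auto intro: F.real_cond_exp_abs_le)
  then have "AE x in M. \<bar>real_cond_exp M ?F ?a x * real_cond_exp M ?F ?b x\<bar> \<le> 1"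
    by (rule AE_abs_mult_le_one)
  then show "AE x in M. real_cond_exp M ?F (\<lambda>x. ?a x * ?b x) x
      = real_cond_exp M ?F ?a x * real_cond_exp M ?F ?b x"
    using \<open>Z \<in> measurable M MZ\<close>
  proof (intro real_cond_exp_vimage_algebra_charact integrable_const_bound[where B=1])
    fix C assume "C \<in> sets MZ"
    then show "(\<integral>x. indicator C (Z x) * (?a x * ?b x) \<partial>M) =
      (\<integral>x. indicator C (Z x) * (real_cond_exp M ?F ?a x * real_cond_exp M ?F ?b x) \<partial>M)"
      using factor[of A B C] by (simp add: mult.assoc)
  qed (auto simp: indicator_def)
qed

lemma integral_mult_eq_of_indicator_integrals_eq:
  fixes f g h :: "'a \<Rightarrow> real"
  assumes Z[measurable]: "Z \<in> measurable M N" and fg: "integrable M f" "integrable M g"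
    and eq: "\<And>C. C \<in> sets N \<Longrightarrow>
      (\<integral>x. indicator C (Z x) * f x \<partial>M) = (\<integral>x. indicator C (Z x) * g x \<partial>M)"
    and h: "h \<in> borel_measurable (vimage_algebra (space M) Z N)" "AE x in M. \<bar>h x\<bar> \<le> 1"
  shows "(\<integral>x. h x * f x \<partial>M) = (\<integral>x. h x * g x \<partial>M)"
proof -
  let ?F = "vimage_algebra (space M) Z N"
  interpret F: sigma_finite_subalgebra M ?F
    by (rule sigma_finite_subalgebra_vimage_algebra) fact
  have [measurable]: "Z \<in> measurable ?F N"
    by (rule measurable_vimage_algebra_self) fact
  have hM[measurable]: "h \<in> borel_measurable M"
    using F.subalg h(1) by (rule measurable_from_subalg)
  have "AE x in M. real_cond_exp M ?F f x = real_cond_exp M ?F g x"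
  proof (rule real_cond_exp_vimage_algebra_charact[OF Z fg(1)])
    fix C assume [measurable]: "C \<in> sets N"
    have "(\<integral>x. indicator C (Z x) * real_cond_exp M ?F g x \<partial>M) = (\<integral>x. indicator C (Z x) * g x \<partial>M)"
      using fg(2) by (intro F.real_cond_exp_intg(2) integrable_mult_bounded[where K=1]) auto
    with eq show "(\<integral>x. indicator C (Z x) * f x \<partial>M) = (\<integral>x. indicator C (Z x) * real_cond_exp M ?F g x \<partial>M)"
      by simp
  qed (use fg(2) in auto)
  then have "(\<integral>x. h x * real_cond_exp M ?F f x \<partial>M) = (\<integral>x. h x * real_cond_exp M ?F g x \<partial>M)"
    by (intro integral_cong_AE) auto
  then show ?thesis
    using fg hM h by (simp add: F.real_cond_exp_intg(2) integrable_mult_bounded)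
qed

(* An event of sigma(V, T) is the disjoint union of the finitely many slices
   {V in D_t, T = t}, on each of which the conditional independence given V applies. *)
lemma real_cond_exp_vimage_pair_eq_of_cond_indep:
  fixes V :: "'a \<Rightarrow> 'v" and T :: "'a \<Rightarrow> 't::finite"
  assumes [measurable]: "Y \<in> measurable M MY" "V \<in> measurable M MV" "T \<in> measurable M (count_space UNIV)"
    and indep: "cond_indep M MY Y (count_space UNIV) T MV V"
    and [measurable]: "B \<in> sets MY"
  shows "AE x in M.
    real_cond_exp M (vimage_algebra (space M) (\<lambda>x. (V x, T x)) (MV \<Otimes>\<^sub>M count_space UNIV))
      (\<lambda>x. indicator B (Y x)) x
    = real_cond_exp M (vimage_algebra (space M) V MV) (\<lambda>x. indicator B (Y x)) x"
proof -
  let ?FV = "vimage_algebra (space M) V MV"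
  let ?b = "\<lambda>x. indicator B (Y x) :: real"
  let ?g = "real_cond_exp M ?FV ?b"
  interpret FV: sigma_finite_subalgebra M ?FV
    by (rule sigma_finite_subalgebra_vimage_algebra) fact
  have VT[measurable]: "(\<lambda>x. (V x, T x)) \<in> measurable M (MV \<Otimes>\<^sub>M count_space UNIV)"
    by measurable
  have [measurable]: "V \<in> measurable ?FV MV"
    by (rule measurable_vimage_algebra_self) fact
  have b: "integrable M ?b"
    by (auto intro!: integrable_const_bound[where B=1])
  then have g: "AE x in M. \<bar>?g x\<bar> \<le> 1"
    by (rule FV.real_cond_exp_abs_le) simp
  have slice: "(\<integral>x. indicator C (V x) * ?b x * indicator {t} (T x) \<partial>M)
      = (\<integral>x. indicator C (V x) * ?g x * indicator {t} (T x) \<partial>M)" if [measurable]: "C \<in> sets MV" for C t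
    by (rule cond_indep_integral_mult[OF _ _ _ indep]) auto
  have integrable_slice: "integrable M (\<lambda>x. indicator C (V x) * f x * indicator {t} (T x))"
    if "integrable M f" "C \<in> sets MV" for f :: "'a \<Rightarrow> real" and C t
  proof -
    have "integrable M (\<lambda>x. (indicator C (V x) * indicator {t} (T x)) * f x)"
      using that by (intro integrable_mult_bounded[where K=1]) (auto split: split_indicator)
    then show ?thesis by (simp add: ac_simps)
  qed
  have decomp: "indicator D (V x, T x) * r
      = (\<Sum>t\<in>UNIV. indicator ((\<lambda>v. (v, t)) -` D) (V x) * r * indicator {t} (T x))"
    for D :: "('v \<times> 't) set" and x and r :: real
    by (subst indicator_Pair_finite_sum) (simp only: sum_distrib_left sum_distrib_right mult_ac)
  show ?thesis
  proof (rule real_cond_exp_vimage_algebra_charact[OF VT b])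
    show "?g \<in> borel_measurable (vimage_algebra (space M) (\<lambda>x. (V x, T x)) (MV \<Otimes>\<^sub>M count_space UNIV))"
      using measurable_vimage_algebra_comp[OF VT measurable_fst, of borel]
        borel_measurable_cond_exp[of M ?FV ?b]
      by auto
    fix D :: "('v \<times> 't) set" assume D: "D \<in> sets (MV \<Otimes>\<^sub>M count_space UNIV)"
    then have slices: "(\<lambda>v. (v, t)) -` D \<in> sets MV" for t
      by (rule sets_Pair2)
    let ?D = "\<lambda>t. (\<lambda>v. (v, t)) -` D"
    have "(\<integral>x. indicator D (V x, T x) * ?b x \<partial>M)
        = (\<integral>x. (\<Sum>t\<in>UNIV. indicator (?D t) (V x) * ?b x * indicator {t} (T x)) \<partial>M)"
      by (simp only: decomp)
    also have "\<dots> = (\<Sum>t\<in>UNIV. \<integral>x. indicator (?D t) (V x) * ?b x * indicator {t} (T x) \<partial>M)"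
      using b slices by (intro Bochner_Integration.integral_sum integrable_slice)
    also have "\<dots> = (\<Sum>t\<in>UNIV. \<integral>x. indicator (?D t) (V x) * ?g x * indicator {t} (T x) \<partial>M)"
      using slices by (simp only: slice)
    also have "\<dots> = (\<integral>x. (\<Sum>t\<in>UNIV. indicator (?D t) (V x) * ?g x * indicator {t} (T x)) \<partial>M)"
      using FV.real_cond_exp_int(1)[OF b] slices
      by (intro Bochner_Integration.integral_sum[symmetric] integrable_slice)
    also have "\<dots> = (\<integral>x. indicator D (V x, T x) * ?g x \<partial>M)"
      by (simp only: decomp)
    finally show "(\<integral>x. indicator D (V x, T x) * ?b x \<partial>M) = (\<integral>x. indicator D (V x, T x) * ?g x \<partial>M)" .
  qed (use FV.real_cond_exp_int(1)[OF b] in auto)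
qed

lemma integral_cond_exp_eq_of_contraction:
  fixes V :: "'a \<Rightarrow> 'v" and T :: "'a \<Rightarrow> 't::finite"
  assumes [measurable]: "X \<in> measurable M MX" "V \<in> measurable M MV" "Y \<in> measurable M MY"
      "T \<in> measurable M (count_space UNIV)"
    and exch: "cond_indep M MY Y (count_space UNIV) T MV V"
    and indep: "cond_indep M MY Y MX X (MV \<Otimes>\<^sub>M count_space UNIV) (\<lambda>x. (V x, T x))"
    and [measurable]: "A \<in> sets MX" "B \<in> sets MY"
  shows "(\<integral>x. indicator A (X x) * indicator S (T x) * indicator B (Y x) \<partial>M) =
    (\<integral>x. indicator A (X x) * indicator S (T x)
      * real_cond_exp M (vimage_algebra (space M) V MV) (\<lambda>x. indicator B (Y x)) x \<partial>M)"
proof -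
  let ?G = "vimage_algebra (space M) (\<lambda>x. (V x, T x)) (MV \<Otimes>\<^sub>M count_space UNIV)"
  let ?b = "\<lambda>x. indicator B (Y x) :: real"
  have VT[measurable]: "(\<lambda>x. (V x, T x)) \<in> measurable M (MV \<Otimes>\<^sub>M count_space UNIV)"
    by measurable
  have "(\<lambda>x. snd (V x, T x)) \<in> measurable ?G (count_space UNIV)"
    using measurable_vimage_algebra_self[OF VT] measurable_snd by (rule measurable_compose)
  then have [measurable]: "T \<in> measurable ?G (count_space UNIV)"
    by simp
  have "(\<integral>x. indicator A (X x) * indicator S (T x) * ?b x \<partial>M)
      = (\<integral>x. indicator S (T x) * ?b x * indicator A (X x) \<partial>M)"
    by (simp only: mult_ac)
  also have "\<dots> = (\<integral>x. indicator S (T x) * real_cond_exp M ?G ?b x * indicator A (X x) \<partial>M)"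
    by (rule cond_indep_integral_mult[OF _ _ VT indep]) auto
  also have "\<dots> = (\<integral>x. indicator S (T x)
      * real_cond_exp M (vimage_algebra (space M) V MV) ?b x * indicator A (X x) \<partial>M)"
  proof (rule integral_cong_AE)
    have "AE x in M. real_cond_exp M ?G ?b x = real_cond_exp M (vimage_algebra (space M) V MV) ?b x"
      by (rule real_cond_exp_vimage_pair_eq_of_cond_indep[OF _ _ _ exch]) auto
    then show "AE x in M. indicator S (T x) * real_cond_exp M ?G ?b x * indicator A (X x)
        = indicator S (T x) * real_cond_exp M (vimage_algebra (space M) V MV) ?b x * indicator A (X x)"
      by eventually_elim simp
  qed auto
  also have "\<dots> = (\<integral>x. indicator A (X x) * indicator S (T x)
      * real_cond_exp M (vimage_algebra (space M) V MV) ?b x \<partial>M)"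
    by (simp only: mult_ac)
  finally show ?thesis .
qed

lemma integral_cond_exp_eq_of_balancing:
  fixes g :: "'a \<Rightarrow> real"
  assumes [measurable]: "X \<in> measurable M MX" "V \<in> measurable M MV"
      "T \<in> measurable M (count_space UNIV)"
    and balancing: "cond_indep M (count_space UNIV) T MV V MX X"
    and [measurable]: "A \<in> sets MX"
    and g: "g \<in> borel_measurable (vimage_algebra (space M) V MV)" "AE x in M. \<bar>g x\<bar> \<le> 1"
  shows "(\<integral>x. indicator A (X x) * indicator S (T x) * g x \<partial>M) =
    (\<integral>x. indicator A (X x)
      * real_cond_exp M (vimage_algebra (space M) X MX) (\<lambda>x. indicator S (T x)) x * g x \<partial>M)"
proof -
  let ?FX = "vimage_algebra (space M) X MX"
  let ?a = "\<lambda>x. indicator A (X x) :: real" and ?\<tau> = "\<lambda>x. indicator S (T x) :: real"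
  have [measurable]: "S \<in> sets (count_space UNIV)"
    by simp
  interpret FX: sigma_finite_subalgebra M ?FX
    by (rule sigma_finite_subalgebra_vimage_algebra) fact
  have [measurable]: "X \<in> measurable ?FX MX"
    by (rule measurable_vimage_algebra_self) fact
  have \<tau>: "integrable M ?\<tau>"
    by (auto intro!: integrable_const_bound[where B=1])
  then have "AE x in M. \<bar>real_cond_exp M ?FX ?\<tau> x\<bar> \<le> 1"
    by (rule FX.real_cond_exp_abs_le) simp
  then have a_E\<tau>: "integrable M (\<lambda>x. ?a x * real_cond_exp M ?FX ?\<tau> x)"
    by (intro integrable_const_bound[where B=1]) (auto simp: abs_mult split: split_indicator)
  have "(\<integral>x. g x * (?a x * ?\<tau> x) \<partial>M) = (\<integral>x. g x * (?a x * real_cond_exp M ?FX ?\<tau> x) \<partial>M)"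
  proof (rule integral_mult_eq_of_indicator_integrals_eq[OF _ _ a_E\<tau> _ g])
    fix C assume [measurable]: "C \<in> sets MV"
    have "(\<integral>x. ?a x * ?\<tau> x * indicator C (V x) \<partial>M)
        = (\<integral>x. ?a x * real_cond_exp M ?FX ?\<tau> x * indicator C (V x) \<partial>M)"
      by (rule cond_indep_integral_mult[OF _ _ _ balancing]) auto
    then show "(\<integral>x. indicator C (V x) * (?a x * ?\<tau> x) \<partial>M)
        = (\<integral>x. indicator C (V x) * (?a x * real_cond_exp M ?FX ?\<tau> x) \<partial>M)"
      by (simp only: mult_ac)
  qed (auto intro!: integrable_const_bound[where B=1] split: split_indicator)
  then show ?thesis
    by (simp only: mult_ac)
qed


lemma cond_indep_of_balancing_covariate:
  fixes V :: "'a \<Rightarrow> 'v" and T :: "'a \<Rightarrow> 't::finite"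
  assumes [measurable]: "X \<in> measurable M MX" "V \<in> measurable M MV" "Y \<in> measurable M MY"
      "T \<in> measurable M (count_space UNIV)"
    and balancing: "cond_indep M (count_space UNIV) T MV V MX X"
    and exch: "cond_indep M MY Y (count_space UNIV) T MV V"
    and indep: "cond_indep M MY Y MX X (MV \<Otimes>\<^sub>M count_space UNIV) (\<lambda>x. (V x, T x))"
  shows "cond_indep M MY Y (count_space UNIV) T MX X"
proof (rule cond_indepI)
  fix B S A assume [measurable]: "B \<in> sets MY" "A \<in> sets MX"
  let ?FX = "vimage_algebra (space M) X MX" and ?FV = "vimage_algebra (space M) V MV"
  let ?a = "\<lambda>x. indicator A (X x) :: real" and ?b = "\<lambda>x. indicator B (Y x) :: real"
  let ?E\<tau> = "real_cond_exp M ?FX (\<lambda>x. indicator S (T x))"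
  let ?g = "real_cond_exp M ?FV ?b"
  interpret FX: sigma_finite_subalgebra M ?FX
    by (rule sigma_finite_subalgebra_vimage_algebra) fact
  interpret FV: sigma_finite_subalgebra M ?FV
    by (rule sigma_finite_subalgebra_vimage_algebra) fact
  have [measurable]: "X \<in> measurable ?FX MX"
    by (rule measurable_vimage_algebra_self) fact
  have b: "integrable M ?b"
    by (auto intro!: integrable_const_bound[where B=1])
  have g: "AE x in M. \<bar>?g x\<bar> \<le> 1"
    using b by (rule FV.real_cond_exp_abs_le) simp
  have "AE x in M. \<bar>?E\<tau> x\<bar> \<le> 1"
    by (auto intro!: FX.real_cond_exp_abs_le integrable_const_bound[where B=1])
  then have a_E\<tau>: "AE x in M. \<bar>?a x * ?E\<tau> x\<bar> \<le> 1"
    by eventually_elim (auto simp: abs_mult split: split_indicator)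
  have contraction: "(\<integral>x. indicator C (X x) * indicator S' (T x) * ?b x \<partial>M) =
      (\<integral>x. indicator C (X x) * indicator S' (T x) * ?g x \<partial>M)" if "C \<in> sets MX" for C S'
    using that by (intro integral_cond_exp_eq_of_contraction[OF _ _ _ _ exch indep]) auto
  have "(\<integral>x. ?a x * ?b x * indicator S (T x) \<partial>M) = (\<integral>x. ?a x * indicator S (T x) * ?g x \<partial>M)"
    using contraction[of A S] by (simp add: mult_ac)
  also have "\<dots> = (\<integral>x. ?a x * ?E\<tau> x * ?g x \<partial>M)"
    using g by (intro integral_cond_exp_eq_of_balancing[OF _ _ _ balancing]) auto
  also have "\<dots> = (\<integral>x. ?a x * ?E\<tau> x * ?b x \<partial>M)"
  proof (rule integral_mult_eq_of_indicator_integrals_eq[OF _ _ b _ _ a_E\<tau>])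
    show "(\<integral>x. indicator C (X x) * ?g x \<partial>M) = (\<integral>x. indicator C (X x) * ?b x \<partial>M)"
      if "C \<in> sets MX" for C
      using contraction[OF that, of UNIV] by simp
  qed (use b in auto)
  also have "\<dots> = (\<integral>x. ?a x * ?E\<tau> x * real_cond_exp M ?FX ?b x \<partial>M)"
    using b a_E\<tau> by (intro FX.real_cond_exp_intg(2)[symmetric] integrable_mult_bounded) auto
  finally show "(\<integral>x. ?a x * ?b x * indicator S (T x) \<partial>M) =
      (\<integral>x. ?a x * real_cond_exp M ?FX ?b x * ?E\<tau> x \<partial>M)"
    by (simp only: mult_ac)
qed auto

end

theorem proposition7:
  fixes M :: "'a measure"
    and MX :: "'x measure" and X :: "'a \<Rightarrow> 'x"
    and MV :: "'v measure" and V :: "'a \<Rightarrow> 'v"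
    and MY :: "'y measure" and Y :: "bool \<Rightarrow> 'a \<Rightarrow> 'y"
    and T :: "'a \<Rightarrow> bool"
  assumes "prob_space M"
    and "X \<in> measurable M MX"
    and "V \<in> measurable M MV"
    and "\<And>t. Y t \<in> measurable M MY"
    and "T \<in> measurable M (count_space UNIV)"
    and balancing: "cond_indep M (count_space UNIV) T MV V MX X"
    and exch_v: "\<And>t. cond_indep M MY (Y t) (count_space UNIV) T MV V"
    and y_x_given_vt: "\<And>t. cond_indep M MY (Y t) MX X
                          (MV \<Otimes>\<^sub>M count_space UNIV) (\<lambda>\<omega>. (V \<omega>, T \<omega>))"
  shows "\<forall>t. cond_indep M MY (Y t) (count_space UNIV) T MX X"
proof
  fix t
  interpret prob_space M by fact
  show "cond_indep M MY (Y t) (count_space UNIV) T MX X"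
    using assms(2-5) balancing exch_v y_x_given_vt by (rule cond_indep_of_balancing_covariate)
qed

end
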